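(* Let $K=(S,L,\to)$ be a Kripke structure and $\mathcal{C}$ a colouring of $S$ such that any two states with the same colour satisfy the same atomic propositions, have the same $\mathcal{C}$-coloured traces of length two, and have the same complete $\mathcal{C}$-coloured traces of length one. Then $\mathcal{C}$ is fully consistent.
   Context: Fix a set $\mathbf{AP}$ of atomic propositions. A Kripke structure is $K=(S,L,\to)$ with $L:S\to\mathcal{P}(\mathbf{AP})$ and $\to\subseteq S\times S$ (not necessarily total); a state $s$ satisfies $p\in\mathbf{AP}$ iff $p\in L(s)$. A finite path from $s$ is a sequence $s_0,\dots,s_n$ with $s_0=s$ and $s_k\to s_{k+1}$; an infinite path is defined analogously; a path is maximal if it is infinite or its last state has no successor. A colouring is a function $\mathcal{C}$ from $S$ into an arbitrary set of colours. For a path $\pi=s_0,s_1,\dots$, $\mathcal{C}(\pi)$ is obtained from $\mathcal{C}(s_0),\mathcal{C}(s_1),\dots$ by contracting each maximal (finite or infinite) block of consecutive equal colours to a single colour; for $\pi$ a path from $s$, $\mathcal{C}(\pi)$ is a $\mathcal{C}$-coloured trace of $s$, complete if $\pi$ is maximal; its length is its number of entries. $\mathcal{C}$ is fully consistent if any two states of the same colour satisfy the same atomic propositions and have the same complete $\mathcal{C}$-coloured traces. *)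

theory Defs
  imports Main "HOL-Library.Infinite_Set" "HOL-Library.Extended_Nat"
begin

text \<open>A Kripke structure is given by a labelling L and a transition relation R on the
  state type 's (the state set S is UNIV :: 's set). A colouring is a map C :: 's => 'c.\<close>

datatype 'c ctrace = FinT "'c list" | InfT "nat \<Rightarrow> 'c"

fun ctrace_len :: "'c ctrace \<Rightarrow> enat" where
  "ctrace_len (FinT xs) = enat (length xs)"
| "ctrace_len (InfT f) = \<infinity>"

text \<open>Contraction of maximal blocks of equal consecutive colours.\<close>
definition contract_fin :: "'c list \<Rightarrow> 'c ctrace" where
  "contract_fin xs = FinT (remdups_adj xs)"

definition contract_inf :: "(nat \<Rightarrow> 'c) \<Rightarrow> 'c ctrace" where
  "contract_inf f =
     (let P = {n. n = 0 \<or> f n \<noteq> f (n - 1)}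
      in if finite P then FinT (map f (sorted_list_of_set P))
         else InfT (f \<circ> enumerate P))"

definition fin_path :: "('s \<Rightarrow> 's \<Rightarrow> bool) \<Rightarrow> 's \<Rightarrow> 's list \<Rightarrow> bool" where
  "fin_path R s xs \<longleftrightarrow> xs \<noteq> [] \<and> hd xs = s \<and>
     (\<forall>i. Suc i < length xs \<longrightarrow> R (xs ! i) (xs ! Suc i))"

definition inf_path :: "('s \<Rightarrow> 's \<Rightarrow> bool) \<Rightarrow> 's \<Rightarrow> (nat \<Rightarrow> 's) \<Rightarrow> bool" where
  "inf_path R s f \<longleftrightarrow> f 0 = s \<and> (\<forall>n. R (f n) (f (Suc n)))"

definition ctraces :: "('s \<Rightarrow> 's \<Rightarrow> bool) \<Rightarrow> ('s \<Rightarrow> 'c) \<Rightarrow> 's \<Rightarrow> 'c ctrace set" where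
  "ctraces R C s =
     {contract_fin (map C xs) | xs. fin_path R s xs} \<union>
     {contract_inf (C \<circ> f) | f. inf_path R s f}"

definition complete_ctraces :: "('s \<Rightarrow> 's \<Rightarrow> bool) \<Rightarrow> ('s \<Rightarrow> 'c) \<Rightarrow> 's \<Rightarrow> 'c ctrace set" where
  "complete_ctraces R C s =
     {contract_fin (map C xs) | xs. fin_path R s xs \<and> (\<forall>t. \<not> R (last xs) t)} \<union>
     {contract_inf (C \<circ> f) | f. inf_path R s f}"

definition fully_consistent ::
  "('s \<Rightarrow> 'ap set) \<Rightarrow> ('s \<Rightarrow> 's \<Rightarrow> bool) \<Rightarrow> ('s \<Rightarrow> 'c) \<Rightarrow> bool" where
  "fully_consistent L R C \<longleftrightarrow>
     (\<forall>s t. C s = C t \<longrightarrow> L s = L t \<and> complete_ctraces R C s = complete_ctraces R C t)"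

end

theory Submission
  imports Defs "HOL-Library.Omega_Words_Fun"
begin

text \<open>Equality of the coloured traces of length two lets us transfer a single colour block:
  if \<open>s\<close> can stay in its colour and then enter a state of colour \<open>d\<close>, so can every \<open>t\<close>
  of the same colour. A complete trace of \<open>s\<close> is cut into its colour blocks, which are
  transferred one after the other to a path from \<open>t\<close> -- by induction on the length for a
  finite trace, by dependent choice for an infinite one. A finite complete trace ends in a
  last block that is never left, either because of a deadlock or because an infinite path
  stabilises in one colour; that block is a complete trace of length one of the state where
  it begins, and the hypothesis on such traces transfers it as well.\<close>

section \<open>Contraction of colour sequences\<close>

definition change_points :: "(nat \<Rightarrow> 'c) \<Rightarrow> nat set" where
  "change_points f = {n. n = 0 \<or> f n \<noteq> f (n - 1)}"

lemma contract_inf_change_points: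
  "contract_inf f =
     (if finite (change_points f) then FinT (map f (sorted_list_of_set (change_points f)))
      else InfT (f \<circ> enumerate (change_points f)))"
  by (simp add: contract_inf_def change_points_def)

lemma remdups_adj_map_upt:
  "remdups_adj (map f [0..<Suc m]) = map f (filter (\<lambda>n. n \<in> change_points f) [0..<Suc m])"
proof (induction m)
  case (Suc m)
  have "remdups_adj (map f [0..<Suc (Suc m)]) = remdups_adj (map f [0..<Suc m] @ [f (Suc m)])"
    by simp
  also have "\<dots> = remdups_adj (map f [0..<Suc m]) @ (if f (Suc m) = f m then [] else [f (Suc m)])"
    by (subst remdups_adj_append'') (auto simp: last_map)
  also have "\<dots> = map f (filter (\<lambda>n. n \<in> change_points f) [0..<Suc (Suc m)])"
    unfolding Suc.IH upt_Suc_append[of 0 "Suc m"] filter_append map_append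
    by (simp add: change_points_def)
  finally show ?case .
qed (simp add: change_points_def)

lemma contract_inf_eventually_const:
  assumes "\<forall>n\<ge>N. f n = f N"
  shows "contract_inf f = FinT (remdups_adj (map f [0..<Suc N]))"
proof -
  define ns where "ns = filter (\<lambda>n. n \<in> change_points f) [0..<Suc N]"
  have "n < Suc N" if "n \<in> change_points f" for n
  proof (rule ccontr)
    assume "\<not> n < Suc N"
    then have "f n = f N" "f (n - 1) = f N" "n \<noteq> 0"
      using assms[rule_format, of n] assms[rule_format, of "n - 1"] by auto
    then show False
      using that by (simp add: change_points_def)
  qed
  then have "change_points f = set ns"
    by (auto simp: ns_def simp del: upt_Suc)
  moreover have "sorted_list_of_set (set ns) = ns"
    unfolding ns_def
    by (intro sorted_list_of_set.idem_if_sorted_distinct sorted_wrt_filter) (simp_all del: upt_Suc)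
  ultimately have "contract_inf f = FinT (map f ns)"
    by (simp add: contract_inf_change_points)
  then show ?thesis
    by (simp add: remdups_adj_map_upt ns_def del: upt_Suc)
qed

lemma contract_inf_FinT_imp_eventually_const:
  assumes "contract_inf f = FinT l"
  obtains N where "\<forall>n\<ge>N. f n = f N"
proof
  let ?N = "Max (change_points f)"
  have fin: "finite (change_points f)"
    using assms by (auto simp: contract_inf_change_points split: if_splits)
  show "\<forall>n\<ge>?N. f n = f ?N"
  proof (intro allI impI)
    fix n assume "?N \<le> n"
    then show "f n = f ?N"
    proof (induction n rule: dec_induct)
      case (step m)
      then have "Suc m \<notin> change_points f"
        using Max_ge[OF fin, of "Suc m"] by auto
      then show ?case
        using step.IH by (simp add: change_points_def)
    qed simp
  qed
qed

lemma contract_inf_comp_FinT: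
  assumes "contract_inf (C \<circ> f) = FinT l"
  obtains N where "\<forall>n\<ge>N. C (f n) = C (f N)" "l = remdups_adj (map C (map f [0..<Suc N]))"
proof -
  obtain N where N: "\<forall>n\<ge>N. (C \<circ> f) n = (C \<circ> f) N"
    using contract_inf_FinT_imp_eventually_const[OF assms] .
  then have "contract_inf (C \<circ> f) = FinT (remdups_adj (map (C \<circ> f) [0..<Suc N]))"
    by (rule contract_inf_eventually_const)
  then have "l = remdups_adj (map C (map f [0..<Suc N]))"
    using assms by (simp del: upt_Suc)
  moreover have "\<forall>n\<ge>N. C (f n) = C (f N)"
    using N unfolding comp_def .
  ultimately show thesis
    using that by blast
qed

lemma remdups_adj_const:
  "xs \<noteq> [] \<Longrightarrow> \<forall>x\<in>set xs. x = c \<Longrightarrow> remdups_adj xs = [c]"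
  by (induction xs rule: remdups_adj.induct) auto

lemma remdups_adj_const_append:
  assumes "xs \<noteq> []" "\<forall>x\<in>set xs. x = c" "ys = [] \<or> hd ys \<noteq> c"
  shows "remdups_adj (xs @ ys) = c # remdups_adj ys"
proof -
  have "last xs = c"
    using assms(1,2) by simp
  then have "remdups_adj (xs @ ys) = remdups_adj xs @ remdups_adj ys"
    using assms(3) by (intro remdups_adj_append') auto
  then show ?thesis
    using remdups_adj_const[OF assms(1,2)] by simp
qed

lemma enumerate_range_strict_mono:
  fixes q :: "nat \<Rightarrow> nat"
  assumes "strict_mono q"
  shows "enumerate (range q) = q"
proof
  have inf: "infinite (range q)"
    using assms strict_mono_imp_inj_on range_inj_infinite by blast
  fix k
  show "enumerate (range q) k = q k"
  proof (induction k)
    case 0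
    have "(LEAST n. n \<in> range q) = q 0"
      using assms by (intro Least_equality) (auto simp: strict_mono_less_eq)
    then show ?case
      by (simp add: enumerate_0)
  next
    case (Suc k)
    have "(LEAST n. n \<in> range q \<and> q k < n) = q (Suc k)"
      using assms by (intro Least_equality) (auto simp: strict_mono_less strict_mono_less_eq Suc_le_eq)
    then show ?case
      using Suc enumerate_Suc''[OF inf, of k] by simp
  qed
qed

lemma contract_inf_idx_sequence_blocks:
  assumes iseq: "idx_sequence q"
    and block: "\<And>k n. q k \<le> n \<Longrightarrow> n < q (Suc k) \<Longrightarrow> f n = f (q k)"
    and change: "\<And>k. f (q (Suc k)) \<noteq> f (q k)"
  shows "contract_inf f = InfT (f \<circ> q)"
proof -
  have mono: "strict_mono q"
    using iseq by (simp add: idx_sequence_def strict_mono_Suc_iff)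
  have "change_points f = range q"
  proof (intro set_eqI iffI)
    fix n assume n: "n \<in> change_points f"
    obtain k where k: "q k \<le> n" "n < q (Suc k)"
      using idx_sequence_interval[OF iseq, of n] by auto
    show "n \<in> range q"
    proof (rule ccontr)
      assume "n \<notin> range q"
      then have "q k < n"
        using k(1) by (auto simp: le_less)
      then have "q k \<le> n - 1" "n \<noteq> 0"
        by auto
      then have "f n = f (n - 1)"
        using k block[of k n] block[of k "n - 1"] by simp
      then show False
        using n \<open>n \<noteq> 0\<close> by (simp add: change_points_def)
    qed
  next
    fix n assume "n \<in> range q"
    then obtain k where n: "n = q k"
      by auto
    show "n \<in> change_points f"
    proof (cases k)
      case 0
      then show ?thesis
        using n iseq by (simp add: idx_sequence_def change_points_def)
    next
      case (Suc j)
      have "q j < q k"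
        using mono Suc by (simp add: strict_mono_less)
      then have "f (q k - 1) = f (q j)"
        using block[of j "q k - 1"] Suc by simp
      then show ?thesis
        using change[of j] n Suc by (simp add: change_points_def)
    qed
  qed
  moreover have "infinite (range q)"
    using mono strict_mono_imp_inj_on range_inj_infinite by blast
  ultimately show ?thesis
    using enumerate_range_strict_mono[OF mono] by (simp add: contract_inf_change_points)
qed

lemma enumerate_change_points:
  assumes inf: "infinite (change_points f)"
  defines "p \<equiv> enumerate (change_points f)"
  shows "p 0 = 0"
    and "p k \<le> n \<Longrightarrow> n < p (Suc k) \<Longrightarrow> f n = f (p k)"
    and "f (p (Suc k)) \<noteq> f (p k)"
proof -
  have mono: "strict_mono p" and range: "range p = change_points f"
    unfolding p_def using strict_mono_enumerate[OF inf] range_enumerate[OF inf] .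
  show "p 0 = 0"
    unfolding p_def enumerate_0 by (rule Least_equality) (auto simp: change_points_def)
  show const: "f n = f (p k)" if "p k \<le> n" and bound: "n < p (Suc k)" for n
    using that(1)
  proof (induction n rule: dec_induct)
    case (step m)
    have "Suc m \<notin> range p"
    proof
      assume "Suc m \<in> range p"
      then obtain j where "Suc m = p j"
        by auto
      then have "p k < p j" "p j < p (Suc k)"
        using step bound by auto
      then have "k < j" "j < Suc k"
        using mono by (simp_all add: strict_mono_less)
      then show False
        by simp
    qed
    then show ?case
      using step range by (simp add: change_points_def)
  qed simp
  have less: "p k < p (Suc k)"
    using mono by (simp add: strict_mono_def)
  have "p (Suc k) \<in> change_points f" "p (Suc k) \<noteq> 0"
    using range less by auto
  then show "f (p (Suc k)) \<noteq> f (p k)"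
    using const[of "p (Suc k) - 1"] less by (simp add: change_points_def)
qed

section \<open>Paths and their complete traces\<close>

lemma fin_path_iff_successively:
  "fin_path R s xs \<longleftrightarrow> xs \<noteq> [] \<and> hd xs = s \<and> successively R xs"
  by (auto simp: fin_path_def successively_conv_nth)

lemma fin_path_append:
  assumes "fin_path R x ys" "R (last ys) y" "fin_path R y zs"
  shows "fin_path R x (ys @ zs)"
  using assms by (simp add: fin_path_iff_successively successively_append_iff)

lemma fin_path_prefix: "inf_path R s f \<Longrightarrow> fin_path R s (map f [0..<Suc N])"
  by (auto simp: inf_path_def fin_path_def hd_map simp del: upt_Suc)

lemma inf_path_suffix: "inf_path R s f \<Longrightarrow> inf_path R (f N) (suffix N f)"
  by (simp add: inf_path_def)

lemma inf_path_conc: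
  assumes "fin_path R x ys" "R (last ys) y" "inf_path R y g"
  shows "inf_path R x (ys \<frown> g)"
  unfolding inf_path_def
proof (intro conjI allI)
  show "(ys \<frown> g) 0 = x"
    using assms(1) by (auto simp: fin_path_def hd_conv_nth)
  fix n
  consider "Suc n < length ys" | "Suc n = length ys" | "length ys \<le> n"
    by linarith
  then show "R ((ys \<frown> g) n) ((ys \<frown> g) (Suc n))"
  proof cases
    case 1
    then show ?thesis using assms(1) by (simp add: fin_path_def)
  next
    case 2
    then have "ys \<noteq> []" "length ys - 1 = n"
      by auto
    then have "ys ! n = last ys"
      by (simp add: last_conv_nth)
    then show ?thesis
      using 2 assms(2,3) by (simp add: inf_path_def)
  next
    case 3
    then show ?thesis using assms(3) by (simp add: inf_path_def Suc_diff_le)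
  qed
qed

lemma fin_ctrace_obtain_path:
  assumes "FinT l \<in> ctraces R C s"
  obtains xs where "fin_path R s xs" "l = remdups_adj (map C xs)"
  using assms unfolding ctraces_def
proof (elim UnE CollectE exE conjE)
  fix f assume trace: "FinT l = contract_inf (C \<circ> f)" and path: "inf_path R s f"
  obtain N where "l = remdups_adj (map C (map f [0..<Suc N]))"
    using contract_inf_comp_FinT[OF trace[symmetric]] by metis
  then show thesis
    using that fin_path_prefix[OF path] by blast
qed (auto simp: contract_fin_def that)

lemma fin_complete_ctrace_cases:
  assumes "FinT l \<in> complete_ctraces R C s"
  obtains (deadlock) xs where "fin_path R s xs" "\<forall>t. \<not> R (last xs) t" "l = remdups_adj (map C xs)"
  | (stable) f N where "inf_path R s f" "\<forall>n\<ge>N. C (f n) = C (f N)"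
      "l = remdups_adj (map C (map f [0..<Suc N]))"
  using assms unfolding complete_ctraces_def
proof (elim UnE CollectE exE conjE)
  fix xs assume "FinT l = contract_fin (map C xs)" "fin_path R s xs" "\<forall>t. \<not> R (last xs) t"
  then show thesis
    using deadlock by (simp add: contract_fin_def)
next
  fix f assume trace: "FinT l = contract_inf (C \<circ> f)" and path: "inf_path R s f"
  obtain N where "\<forall>n\<ge>N. C (f n) = C (f N)" "l = remdups_adj (map C (map f [0..<Suc N]))"
    using contract_inf_comp_FinT[OF trace[symmetric]] by metis
  then show thesis
    using stable path by blast
qed

lemma deadlock_unit_complete_ctrace:
  assumes "\<forall>t. \<not> R s t"
  shows "FinT [C s] \<in> complete_ctraces R C s"
proof -
  have "fin_path R s [s]"
    by (simp add: fin_path_def)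
  then show ?thesis
    using assms unfolding complete_ctraces_def contract_fin_def
    by (intro UnI1 CollectI exI[of _ "[s]"]) simp
qed

lemma stable_unit_complete_ctrace:
  assumes path: "inf_path R s f" and stable: "\<forall>n\<ge>N. C (f n) = C (f N)"
  shows "FinT [C (f N)] \<in> complete_ctraces R C (f N)"
proof -
  have "\<forall>n\<ge>0. (C \<circ> suffix N f) n = (C \<circ> suffix N f) 0"
    using stable[rule_format, OF le_add1] by simp
  then have "contract_inf (C \<circ> suffix N f) = FinT (remdups_adj (map (C \<circ> suffix N f) [0..<Suc 0]))"
    by (rule contract_inf_eventually_const)
  then have "contract_inf (C \<circ> suffix N f) = FinT [C (f N)]"
    by simp
  then show ?thesis
    using inf_path_suffix[OF path] unfolding complete_ctraces_def
    by (intro UnI2 CollectI exI[of _ "suffix N f"]) simp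
qed

section \<open>Colour blocks\<close>

definition colour_block :: "('s \<Rightarrow> 's \<Rightarrow> bool) \<Rightarrow> ('s \<Rightarrow> 'c) \<Rightarrow> 's \<Rightarrow> 's list \<Rightarrow> 's \<Rightarrow> bool" where
  "colour_block R C x ys y \<longleftrightarrow>
     fin_path R x ys \<and> (\<forall>z\<in>set ys. C z = C x) \<and> R (last ys) y \<and> C y \<noteq> C x"

lemma remdups_adj_colour_block_append:
  assumes "colour_block R C x ys y" "fin_path R y zs"
  shows "remdups_adj (map C (ys @ zs)) = C x # remdups_adj (map C zs)"
proof -
  have "map C ys \<noteq> []" "\<forall>c\<in>set (map C ys). c = C x" "map C zs = [] \<or> hd (map C zs) \<noteq> C x"
    using assms by (auto simp: colour_block_def fin_path_def hd_map)
  then show ?thesis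
    unfolding map_append by (rule remdups_adj_const_append)
qed

lemma colour_block_two_trace:
  assumes "colour_block R C x ys y"
  shows "FinT [C x, C y] \<in> ctraces R C x"
proof -
  have path: "fin_path R y [y]"
    by (simp add: fin_path_def)
  then have "fin_path R x (ys @ [y])"
    using assms by (auto simp: colour_block_def intro: fin_path_append)
  moreover have "remdups_adj (map C (ys @ [y])) = [C x, C y]"
    using remdups_adj_colour_block_append[OF assms path] by simp
  ultimately show ?thesis
    unfolding ctraces_def contract_fin_def by (intro UnI1 CollectI exI[of _ "ys @ [y]"]) simp
qed

lemma fin_path_split_colour_block:
  assumes path: "fin_path R s xs" and "\<exists>x\<in>set xs. C x \<noteq> C s"
  obtains ys zs where "xs = ys @ zs" "colour_block R C s ys (hd zs)" "fin_path R (hd zs) zs"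
proof
  let ?ys = "takeWhile (\<lambda>x. C x = C s) xs" and ?zs = "dropWhile (\<lambda>x. C x = C s) xs"
  show split: "xs = ?ys @ ?zs"
    by simp
  have hd: "hd xs = s" "xs \<noteq> []"
    using path by (auto simp: fin_path_def)
  then have ys: "?ys \<noteq> []" "hd ?ys = s"
    using split hd_append2[of ?ys ?zs] by (auto simp: takeWhile_eq_Nil_iff)
  have zs: "?zs \<noteq> []" "C (hd ?zs) \<noteq> C s"
    using assms(2) hd_dropWhile[of "\<lambda>x. C x = C s" xs] by auto
  have "successively R (?ys @ ?zs)"
    using path split by (metis fin_path_iff_successively)
  then have "successively R ?ys" "successively R ?zs" "R (last ?ys) (hd ?zs)"
    using ys zs unfolding successively_append_iff by auto
  then show "colour_block R C s ?ys (hd ?zs)" "fin_path R (hd ?zs) ?zs"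
    using ys zs by (auto simp: colour_block_def fin_path_iff_successively dest: set_takeWhileD)
qed

lemma two_trace_obtain_colour_block:
  assumes "FinT [c, d] \<in> ctraces R C s"
  obtains ys y where "colour_block R C s ys y" "C y = d"
proof -
  obtain xs where path: "fin_path R s xs" and trace: "[c, d] = remdups_adj (map C xs)"
    using fin_ctrace_obtain_path[OF assms] by metis
  have "\<exists>x\<in>set xs. C x \<noteq> C s"
  proof (rule ccontr)
    assume "\<not> ?thesis"
    then have "remdups_adj (map C xs) = [C s]"
      using path by (intro remdups_adj_const) (auto simp: fin_path_def)
    then show False
      using trace by simp
  qed
  then obtain ys zs where "xs = ys @ zs" and block: "colour_block R C s ys (hd zs)"
    and "fin_path R (hd zs) zs"
    using fin_path_split_colour_block[OF path] by metis
  then have "[c, d] = C s # remdups_adj (map C zs)" and "zs \<noteq> []"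
    using trace remdups_adj_colour_block_append[OF block] by (auto simp: fin_path_def)
  then have "C (hd zs) = d"
    by (metis hd_map hd_remdups_adj list.inject list.sel(1))
  then show thesis
    using that block by blast
qed

lemma complete_ctrace_Cons_colour_block:
  assumes block: "colour_block R C s ys u" and "FinT l \<in> complete_ctraces R C u"
  shows "FinT (C s # l) \<in> complete_ctraces R C s"
  using assms(2)
proof (cases rule: fin_complete_ctrace_cases)
  case (deadlock zs)
  have "fin_path R s (ys @ zs)"
    using block deadlock(1) by (auto simp: colour_block_def intro: fin_path_append)
  moreover have "last (ys @ zs) = last zs"
    using deadlock(1) by (simp add: fin_path_def)
  moreover have "remdups_adj (map C (ys @ zs)) = C s # l"
    using remdups_adj_colour_block_append[OF block deadlock(1)] deadlock(3) by simp
  ultimately show ?thesis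
    using deadlock(2) unfolding complete_ctraces_def contract_fin_def
    by (intro UnI1 CollectI exI[of _ "ys @ zs"]) simp
next
  case (stable f N)
  let ?h = "ys \<frown> f" and ?M = "length ys + N"
  have path: "inf_path R s ?h"
    using block stable(1) by (intro inf_path_conc) (auto simp: colour_block_def)
  have "\<forall>n\<ge>?M. (C \<circ> ?h) n = (C \<circ> ?h) ?M"
  proof (intro allI impI)
    fix n assume "?M \<le> n"
    then show "(C \<circ> ?h) n = (C \<circ> ?h) ?M"
      using stable(2)[rule_format, of "n - length ys"] by simp
  qed
  then have "contract_inf (C \<circ> ?h) = FinT (remdups_adj (map (C \<circ> ?h) [0..<Suc ?M]))"
    by (rule contract_inf_eventually_const)
  also have "map (C \<circ> ?h) [0..<Suc ?M] = map C (ys @ map f [0..<Suc N])"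
    using prefix_conc_snd[of ys "Suc ?M" f] unfolding map_map[symmetric]
    by (simp add: subsequence_def del: upt_Suc)
  also have "remdups_adj (map C (ys @ map f [0..<Suc N])) = C s # l"
    using remdups_adj_colour_block_append[OF block fin_path_prefix[OF stable(1)]] stable(3) by simp
  finally show ?thesis
    using path unfolding complete_ctraces_def by (intro UnI2 CollectI exI[of _ ?h]) simp
qed

lemma inf_path_colour_blocks:
  assumes path: "inf_path R s f" and inf: "infinite (change_points (C \<circ> f))"
  defines "p \<equiv> enumerate (change_points (C \<circ> f))"
  shows "colour_block R C (f (p k)) (map f [p k..<p (Suc k)]) (f (p (Suc k)))"
proof -
  have step: "R (f n) (f (Suc n))" for n
    using path by (simp add: inf_path_def)
  have less: "p k < p (Suc k)"
    using strict_mono_enumerate[OF inf] by (simp add: p_def strict_mono_def)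
  have const: "C (f n) = C (f (p k))" if "p k \<le> n" "n < p (Suc k)" for n
    using enumerate_change_points(2)[OF inf that[unfolded p_def]] by (simp add: p_def)
  have block_end: "last (map f [p k..<p (Suc k)]) = f (p (Suc k) - 1)" "Suc (p (Suc k) - 1) = p (Suc k)"
    using less by (simp_all add: last_map)
  show "colour_block R C (f (p k)) (map f [p k..<p (Suc k)]) (f (p (Suc k)))"
    unfolding colour_block_def fin_path_def
  proof (intro conjI allI impI ballI)
    show "map f [p k..<p (Suc k)] \<noteq> []" "hd (map f [p k..<p (Suc k)]) = f (p k)"
      using less by (simp_all add: hd_map)
    show "R (last (map f [p k..<p (Suc k)])) (f (p (Suc k)))"
      using step[of "p (Suc k) - 1"] block_end by simp
    show "C (f (p (Suc k))) \<noteq> C (f (p k))"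
      using enumerate_change_points(3)[OF inf] by (simp add: p_def)
  next
    fix i assume "Suc i < length (map f [p k..<p (Suc k)])"
    then show "R (map f [p k..<p (Suc k)] ! i) (map f [p k..<p (Suc k)] ! Suc i)"
      using step[of "p k + i"] by simp
  next
    fix z assume "z \<in> set (map f [p k..<p (Suc k)])"
    then obtain n where "z = f n" "p k \<le> n" "n < p (Suc k)"
      by auto
    then show "C z = C (f (p k))"
      using const by blast
  qed
qed

lemma inf_path_concat_colour_blocks:
  assumes blocks: "\<And>k. colour_block R C (v k) (segs k) (v (Suc k))"
  obtains g where "inf_path R (v 0) g" "contract_inf (C \<circ> g) = InfT (C \<circ> v)"
proof
  define q where "q k = (\<Sum>i<k. length (segs i))" for k
  define g where "g = merge (\<lambda>k n. segs k ! (n - q k)) q"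
  have len: "0 < length (segs k)" for k
    using blocks[of k] by (simp add: colour_block_def fin_path_def)
  have q_Suc: "q (Suc k) = q k + length (segs k)" for k
    by (simp add: q_def)
  have iseq: "idx_sequence q"
    using len by (simp add: idx_sequence_def q_Suc) (simp add: q_def)
  have g: "g n = segs k ! (n - q k)" if "q k \<le> n" "n < q (Suc k)" for n k
    using merge[OF iseq, of n k] that by (simp add: g_def)
  have g_q: "g (q k) = v k" for k
    using g[of k "q k"] len[of k] blocks[of k]
    by (simp add: q_Suc colour_block_def fin_path_def hd_conv_nth)
  have colour: "C (g n) = C (v k)" if "q k \<le> n" "n < q (Suc k)" for n k
    using g[OF that] that blocks[of k] by (simp add: q_Suc colour_block_def)
  show "inf_path R (v 0) g"
    unfolding inf_path_def
  proof (intro conjI allI)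
    show "g 0 = v 0"
      using g_q[of 0] by (simp add: q_def)
    fix n
    obtain k where k: "q k \<le> n" "n < q (Suc k)"
      using idx_sequence_interval[OF iseq, of n] by auto
    have path: "fin_path R (v k) (segs k)" "R (last (segs k)) (v (Suc k))"
      using blocks[of k] by (auto simp: colour_block_def)
    show "R (g n) (g (Suc n))"
    proof (cases "Suc n < q (Suc k)")
      case True
      then show ?thesis
        using path(1) k g[OF k] g[of k "Suc n"] by (simp add: fin_path_def q_Suc Suc_diff_le)
    next
      case False
      then have next_block: "Suc n = q (Suc k)"
        using k by simp
      then have "n - q k = length (segs k) - 1"
        using k by (simp add: q_Suc)
      then have "g n = last (segs k)"
        using g[OF k] len[of k] by (simp add: last_conv_nth)
      then show ?thesis
        using path(2) g_q[of "Suc k"] next_block by simp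
    qed
  qed
  have "contract_inf (C \<circ> g) = InfT (C \<circ> g \<circ> q)"
  proof (rule contract_inf_idx_sequence_blocks[OF iseq])
    show "(C \<circ> g) n = (C \<circ> g) (q k)" if "q k \<le> n" "n < q (Suc k)" for k n
      using colour[OF that] g_q by simp
    show "(C \<circ> g) (q (Suc k)) \<noteq> (C \<circ> g) (q k)" for k
      using g_q blocks[of k] by (simp add: colour_block_def)
  qed
  also have "C \<circ> g \<circ> q = C \<circ> v"
    using g_q by (simp add: fun_eq_iff)
  finally show "contract_inf (C \<circ> g) = InfT (C \<circ> v)" .
qed

section \<open>Transfer of complete traces\<close>

definition two_traces_consistent :: "('s \<Rightarrow> 's \<Rightarrow> bool) \<Rightarrow> ('s \<Rightarrow> 'c) \<Rightarrow> bool" where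
  "two_traces_consistent R C \<longleftrightarrow> (\<forall>s t. C s = C t \<longrightarrow>
     {\<tau> \<in> ctraces R C s. ctrace_len \<tau> = 2} = {\<tau> \<in> ctraces R C t. ctrace_len \<tau> = 2})"

definition unit_complete_traces_consistent :: "('s \<Rightarrow> 's \<Rightarrow> bool) \<Rightarrow> ('s \<Rightarrow> 'c) \<Rightarrow> bool" where
  "unit_complete_traces_consistent R C \<longleftrightarrow> (\<forall>s t. C s = C t \<longrightarrow>
     {\<tau> \<in> complete_ctraces R C s. ctrace_len \<tau> = 1} = {\<tau> \<in> complete_ctraces R C t. ctrace_len \<tau> = 1})"

lemma colour_block_transfer:
  assumes "two_traces_consistent R C" "C s = C t" "colour_block R C s xs x"
  obtains ys y where "colour_block R C t ys y" "C y = C x"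
proof -
  have "FinT [C s, C x] \<in> {\<tau> \<in> ctraces R C s. ctrace_len \<tau> = 2}"
    using colour_block_two_trace[OF assms(3)] by (simp add: numeral_eq_enat)
  then have "FinT [C s, C x] \<in> ctraces R C t"
    using assms(1,2) unfolding two_traces_consistent_def by blast
  then have "FinT [C t, C x] \<in> ctraces R C t"
    using assms(2) by simp
  then show thesis
    using that two_trace_obtain_colour_block by metis
qed

lemma fin_complete_ctrace_transfer:
  assumes two: "two_traces_consistent R C" and unit: "unit_complete_traces_consistent R C"
  shows "fin_path R s xs \<Longrightarrow> FinT [C (last xs)] \<in> complete_ctraces R C (last xs) \<Longrightarrow> C s = C t
    \<Longrightarrow> FinT (remdups_adj (map C xs)) \<in> complete_ctraces R C t"
proof (induction "length xs" arbitrary: s t xs rule: less_induct)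
  case less
  show ?case
  proof (cases "\<exists>x\<in>set xs. C x \<noteq> C s")
    case False
    moreover have "xs \<noteq> []"
      using less.prems(1) by (simp add: fin_path_def)
    ultimately have trace: "remdups_adj (map C xs) = [C s]" and last: "C (last xs) = C s"
      by (auto intro: remdups_adj_const)
    have "FinT [C s] \<in> {\<tau> \<in> complete_ctraces R C (last xs). ctrace_len \<tau> = 1}"
      using less.prems(2) last by (simp add: one_enat_def)
    then have "FinT [C s] \<in> complete_ctraces R C t"
      using unit last less.prems(3) unfolding unit_complete_traces_consistent_def by blast
    then show ?thesis
      using trace by simp
  next
    case True
    then obtain ys zs where split: "xs = ys @ zs" and block: "colour_block R C s ys (hd zs)"
      and zs: "fin_path R (hd zs) zs"
      using fin_path_split_colour_block[OF less.prems(1)] by metis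
    obtain ys' u where block': "colour_block R C t ys' u" and "C u = C (hd zs)"
      using colour_block_transfer[OF two less.prems(3) block] by metis
    moreover have "length zs < length xs" "last zs = last xs"
      using split block zs by (auto simp: colour_block_def fin_path_def)
    ultimately have "FinT (remdups_adj (map C zs)) \<in> complete_ctraces R C u"
      using less.hyps zs less.prems(2) by metis
    then have "FinT (C t # remdups_adj (map C zs)) \<in> complete_ctraces R C t"
      by (rule complete_ctrace_Cons_colour_block[OF block'])
    then show ?thesis
      using remdups_adj_colour_block_append[OF block zs] split less.prems(3) by simp
  qed
qed

lemma colour_block_chain_transfer:
  assumes two: "two_traces_consistent R C"
    and blocks: "\<And>k. \<exists>ys. colour_block R C (x k) ys (x (Suc k))" and "C t = C (x 0)"
  obtains g where "inf_path R t g" "contract_inf (C \<circ> g) = InfT (C \<circ> x)"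
proof -
  have "\<exists>v. \<forall>k. (C (v k) = C (x k) \<and> (k = 0 \<longrightarrow> v k = t))
    \<and> (\<exists>ys. colour_block R C (v k) ys (v (Suc k)))"
  proof (rule dependent_nat_choice)
    show "\<exists>y. C y = C (x 0) \<and> (0 = 0 \<longrightarrow> y = t)"
      using assms(3) by auto
  next
    fix y k assume "C y = C (x k) \<and> (k = 0 \<longrightarrow> y = t)"
    moreover obtain xs where "colour_block R C (x k) xs (x (Suc k))"
      using blocks by blast
    ultimately obtain ys y' where "colour_block R C y ys y'" "C y' = C (x (Suc k))"
      using colour_block_transfer[OF two] by metis
    then show "\<exists>y'. (C y' = C (x (Suc k)) \<and> (Suc k = 0 \<longrightarrow> y' = t))
      \<and> (\<exists>ys. colour_block R C y ys y')"
      by auto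
  qed
  then obtain v segs where v: "\<And>k. C (v k) = C (x k)" "v 0 = t"
    and "\<And>k. colour_block R C (v k) (segs k) (v (Suc k))"
    by metis
  then obtain g where "inf_path R t g" "contract_inf (C \<circ> g) = InfT (C \<circ> v)"
    using inf_path_concat_colour_blocks by metis
  moreover have "C \<circ> v = C \<circ> x"
    using v by (simp add: fun_eq_iff)
  ultimately show thesis
    using that by simp
qed

lemma inf_complete_ctrace_transfer:
  assumes two: "two_traces_consistent R C"
    and path: "inf_path R s f" and inf: "infinite (change_points (C \<circ> f))" and "C s = C t"
  shows "contract_inf (C \<circ> f) \<in> complete_ctraces R C t"
proof -
  let ?p = "enumerate (change_points (C \<circ> f))"
  have "\<And>k. \<exists>ys. colour_block R C (f (?p k)) ys (f (?p (Suc k)))"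
    using inf_path_colour_blocks[OF path inf] by blast
  moreover have "C t = C (f (?p 0))"
    using enumerate_change_points(1)[OF inf] path assms(4) by (simp add: inf_path_def)
  ultimately obtain g where "inf_path R t g" "contract_inf (C \<circ> g) = InfT (C \<circ> (f \<circ> ?p))"
    using colour_block_chain_transfer[OF two, of "f \<circ> ?p"] by auto
  moreover have "contract_inf (C \<circ> f) = InfT (C \<circ> (f \<circ> ?p))"
    using inf by (simp add: contract_inf_change_points comp_assoc)
  ultimately show ?thesis
    unfolding complete_ctraces_def by auto
qed

lemma complete_ctraces_transfer:
  assumes two: "two_traces_consistent R C" and unit: "unit_complete_traces_consistent R C"
    and trace: "\<tau> \<in> complete_ctraces R C s" and "C s = C t"
  shows "\<tau> \<in> complete_ctraces R C t"
proof (cases \<tau>)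
  case (FinT l)
  from trace[unfolded FinT] have "FinT l \<in> complete_ctraces R C t"
  proof (cases rule: fin_complete_ctrace_cases)
    case (deadlock xs)
    then show ?thesis
      using fin_complete_ctrace_transfer[OF two unit] deadlock_unit_complete_ctrace assms(4)
      by metis
  next
    case (stable f N)
    have "last (map f [0..<Suc N]) = f N"
      by simp
    then show ?thesis
      using fin_complete_ctrace_transfer[OF two unit fin_path_prefix[OF stable(1)]]
        stable_unit_complete_ctrace[OF stable(1,2)] stable(3) assms(4)
      by metis
  qed
  then show ?thesis
    using FinT by simp
next
  case (InfT h)
  then obtain f where "\<tau> = contract_inf (C \<circ> f)" "inf_path R s f"
    using trace by (auto simp: complete_ctraces_def contract_fin_def)
  moreover have "infinite (change_points (C \<circ> f))"
    using calculation(1) InfT by (auto simp: contract_inf_change_points split: if_splits)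
  ultimately show ?thesis
    using inf_complete_ctrace_transfer[OF two] assms(4) by blast
qed

theorem lemma2p6:
  fixes L :: "'s \<Rightarrow> 'ap set" and R :: "'s \<Rightarrow> 's \<Rightarrow> bool" and C :: "'s \<Rightarrow> 'c"
  assumes "\<forall>s t. C s = C t \<longrightarrow>
      L s = L t
    \<and> {\<tau> \<in> ctraces R C s. ctrace_len \<tau> = 2} = {\<tau> \<in> ctraces R C t. ctrace_len \<tau> = 2}
    \<and> {\<tau> \<in> complete_ctraces R C s. ctrace_len \<tau> = 1}
      = {\<tau> \<in> complete_ctraces R C t. ctrace_len \<tau> = 1}"
  shows "fully_consistent L R C"
proof -
  have "two_traces_consistent R C" "unit_complete_traces_consistent R C"
    using assms unfolding two_traces_consistent_def unit_complete_traces_consistent_def by blast+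
  then have "complete_ctraces R C s = complete_ctraces R C t" if "C s = C t" for s t
    using complete_ctraces_transfer that by (metis subsetI subset_antisym)
  then show ?thesis
    using assms unfolding fully_consistent_def by blast
qed

end
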